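(* Let $f$ be a light complex-valued harmonic function in $\mathbb{C}$. Let $\Omega$ be a connected component of $\mathbb{C}\setminus(f(S)\cup C(f,\infty))$ such that $(\operatorname{int}\overline{\Omega})\setminus\Omega$ consists of finitely many points. Suppose there is a bounded connected component $R$ of $\mathbb{C}\setminus f^{-1}(f(S)\cup C(f,\infty))$ with $f(R)=\Omega$, and suppose every point of $(\operatorname{int}\overline{R})\setminus R$ is mapped into $(\operatorname{int}\overline{\Omega})\setminus\Omega$. If $(\operatorname{int}\overline{R})\setminus R$ contains no point of $S$, then $f$ is $\mathrm{Val}(f|_R,\Omega)$-to-$1$ on $\operatorname{int}\overline{R}$ (each point of $\operatorname{int}\overline{\Omega}$ has exactly $\mathrm{Val}(f|_R,\Omega)$ distinct preimages in $\operatorname{int}\overline{R}$). Moreover, if $\operatorname{int}\overline{\Omega}$ is simply connected, then $f$ is univalent in $\operatorname{int}\overline{R}$.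
   Context: A function is light if the preimage of each point is empty or totally disconnected. Writing $f=u+iv$, $J_f=u_xv_y-u_yv_x$ and $S=\{z: J_f(z)=0\}$. $C(f,\infty)$ is the set of finite points $\zeta$ for which there is a sequence $(z_n)$ with $|z_n|\to\infty$ and $f(z_n)\to\zeta$. $\mathrm{Val}(f|_R,\Omega)=\sup_{w\in\Omega}\#\{z\in R: f(z)=w\}$. *)

theory Defs
  imports "HOL-Analysis.Analysis" "HOL-Library.Extended_Nat"
begin

definition pdx :: "(complex \<Rightarrow> real) \<Rightarrow> complex \<Rightarrow> real" where
  "pdx g z = deriv (\<lambda>t::real. g (z + of_real t)) 0"

definition pdy :: "(complex \<Rightarrow> real) \<Rightarrow> complex \<Rightarrow> real" where
  "pdy g z = deriv (\<lambda>t::real. g (z + \<i> * of_real t)) 0"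

definition harmonic_real :: "(complex \<Rightarrow> real) \<Rightarrow> bool" where
  "harmonic_real g \<longleftrightarrow>
     (\<forall>z. g differentiable (at z)) \<and>
     (\<forall>z. pdx g differentiable (at z) \<and> pdy g differentiable (at z)) \<and>
     continuous_on UNIV (pdx (pdx g)) \<and> continuous_on UNIV (pdy (pdy g)) \<and>
     continuous_on UNIV (pdx (pdy g)) \<and> continuous_on UNIV (pdy (pdx g)) \<and>
     (\<forall>z. pdx (pdx g) z + pdy (pdy g) z = 0)"

definition harmonic_cplx :: "(complex \<Rightarrow> complex) \<Rightarrow> bool" where
  "harmonic_cplx f \<longleftrightarrow> harmonic_real (\<lambda>z. Re (f z)) \<and> harmonic_real (\<lambda>z. Im (f z))"

definition totally_disconnected :: "'a::topological_space set \<Rightarrow> bool" where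
  "totally_disconnected A \<longleftrightarrow> (\<forall>C. C \<subseteq> A \<and> connected C \<longrightarrow> (\<exists>x. C \<subseteq> {x}))"

definition light :: "(complex \<Rightarrow> complex) \<Rightarrow> bool" where
  "light f \<longleftrightarrow> (\<forall>w. f -` {w} = {} \<or> totally_disconnected (f -` {w}))"

text \<open>Jacobian J_f = u_x v_y - u_y v_x and its zero set S.\<close>
definition jac :: "(complex \<Rightarrow> complex) \<Rightarrow> complex \<Rightarrow> real" where
  "jac f z = pdx (\<lambda>z. Re (f z)) z * pdy (\<lambda>z. Im (f z)) z
           - pdy (\<lambda>z. Re (f z)) z * pdx (\<lambda>z. Im (f z)) z"

definition crit_set :: "(complex \<Rightarrow> complex) \<Rightarrow> complex set" where
  "crit_set f = {z. jac f z = 0}"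

definition cluster_inf :: "(complex \<Rightarrow> complex) \<Rightarrow> complex set" where
  "cluster_inf f = {\<zeta>. \<exists>zs::nat \<Rightarrow> complex.
      filterlim (\<lambda>n. norm (zs n)) at_top sequentially \<and> (\<lambda>n. f (zs n)) \<longlonglongrightarrow> \<zeta>}"

definition ecard :: "'a set \<Rightarrow> enat" where
  "ecard A = (if finite A then enat (card A) else \<infinity>)"

definition Val :: "(complex \<Rightarrow> complex) \<Rightarrow> complex set \<Rightarrow> complex set \<Rightarrow> enat" where
  "Val f R \<Omega> = (SUP w\<in>\<Omega>. ecard {z\<in>R. f z = w})"

end

theory Submission
  imports Defs
begin

text \<open>
  Write \<open>K\<close> and \<open>B\<close> for the interiors of the closures of \<open>R\<close> and \<open>\<Omega>\<close>. On \<open>K\<close> the Jacobian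
  of \<open>f\<close> does not vanish, so by the inverse function theorem \<open>f\<close> is locally injective there and
  maps \<open>K\<close> into \<open>B\<close>. No point \<open>z\<close> of the frontier of \<open>K\<close> is mapped into \<open>B\<close>: near such a \<open>z\<close> the
  frontier of \<open>R\<close> is mapped into the finite set \<open>B - \<Omega>\<close>, hence into the single value \<open>f z\<close>, so
  by lightness it is totally disconnected near \<open>z\<close>; by the boundary bumping theorem such a set
  cannot separate the points of \<open>R\<close> from the points outside \<open>closure R\<close> that accumulate at \<open>z\<close>.
  Since \<open>K\<close> is bounded, \<open>f : K \<rightarrow> B\<close> is therefore a proper local homeomorphism onto the
  connected set \<open>B\<close>, i.e. a finite covering map. All its fibres have the same cardinality, and
  over \<open>\<Omega>\<close> the fibres lie in \<open>R\<close>, so this cardinality is \<open>Val(f|R, \<Omega>)\<close>. If \<open>B\<close> is simply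
  connected, the identity of \<open>B\<close> lifts through the covering, which makes \<open>f\<close> injective on the
  connected set \<open>K\<close>.
\<close>

definition plane_linear :: "real \<Rightarrow> real \<Rightarrow> real \<Rightarrow> real \<Rightarrow> complex \<Rightarrow> complex" where
  "plane_linear a b c d h = Complex (a * Re h + b * Im h) (c * Re h + d * Im h)"

lemma linear_plane_linear: "linear (plane_linear a b c d)"
  by (rule linearI) (simp_all add: plane_linear_def complex_eq_iff algebra_simps)

lemma bounded_linear_plane_linear: "bounded_linear (plane_linear a b c d)"
  using linear_conv_bounded_linear linear_plane_linear by blast

lemma plane_linear_diff:
  "plane_linear a b c d h - plane_linear a' b' c' d' h = plane_linear (a - a') (b - b') (c - c') (d - d') h"
  by (simp add: plane_linear_def complex_eq_iff algebra_simps)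

lemma onorm_plane_linear_le: "onorm (plane_linear a b c d) \<le> \<bar>a\<bar> + \<bar>b\<bar> + \<bar>c\<bar> + \<bar>d\<bar>"
proof (rule onorm_bound)
  fix h
  have "norm (plane_linear a b c d h) \<le> \<bar>a * Re h + b * Im h\<bar> + \<bar>c * Re h + d * Im h\<bar>"
    using cmod_le[of "plane_linear a b c d h"] by (simp add: plane_linear_def)
  also have "\<dots> \<le> (\<bar>a\<bar> + \<bar>b\<bar>) * norm h + (\<bar>c\<bar> + \<bar>d\<bar>) * norm h"
    by (intro add_mono) (auto simp: algebra_simps abs_mult intro!: abs_triangle_ineq[THEN order_trans] add_mono
         mult_left_mono abs_Re_le_cmod abs_Im_le_cmod)
  finally show "norm (plane_linear a b c d h) \<le> (\<bar>a\<bar> + \<bar>b\<bar> + \<bar>c\<bar> + \<bar>d\<bar>) * norm h"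
    by (simp add: algebra_simps)
qed simp

lemma plane_linear_inverse:
  assumes "a * d - b * c \<noteq> 0"
  defines "\<Delta> \<equiv> a * d - b * c"
  shows "plane_linear (d / \<Delta>) (- b / \<Delta>) (- c / \<Delta>) (a / \<Delta>) \<circ> plane_linear a b c d = id"
proof -
  have "d / \<Delta> * (a * x + b * y) + - b / \<Delta> * (c * x + d * y) = (a * d - b * c) * x / \<Delta>"
    and "- c / \<Delta> * (a * x + b * y) + a / \<Delta> * (c * x + d * y) = (a * d - b * c) * y / \<Delta>" for x y
    by (simp_all add: add_divide_distrib[symmetric] algebra_simps)
  then show ?thesis using assms by (simp add: fun_eq_iff plane_linear_def)
qed

lemma locally_injective_plane_map:
  assumes deriv: "\<And>x. (f has_derivative plane_linear (a x) (b x) (c x) (d x)) (at x)"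
    and cont: "isCont a z" "isCont b z" "isCont c z" "isCont d z"
    and det: "a z * d z - b z * c z \<noteq> 0"
  shows "\<exists>r>0. inj_on f (ball z r)"
proof -
  let ?dist = "\<lambda>x. \<bar>a x - a z\<bar> + \<bar>b x - b z\<bar> + \<bar>c x - c z\<bar> + \<bar>d x - d z\<bar>"
  have cont_dist: "isCont ?dist z"
    using cont by (intro continuous_intros)
  have onorm_near: "\<exists>\<delta>>0. \<forall>x. dist z x < \<delta> \<longrightarrow>
          onorm (\<lambda>h. plane_linear (a x) (b x) (c x) (d x) h - plane_linear (a z) (b z) (c z) (d z) h) < e"
    if e: "e > 0" for e
  proof -
    obtain \<delta> where "\<delta> > 0" and \<delta>: "\<And>x. dist x z < \<delta> \<Longrightarrow> dist (?dist x) (?dist z) < e"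
      using cont_dist e unfolding continuous_at_eps_delta by blast
    have "onorm (\<lambda>h. plane_linear (a x) (b x) (c x) (d x) h - plane_linear (a z) (b z) (c z) (d z) h)
            \<le> dist (?dist x) (?dist z)" for x
      using onorm_plane_linear_le[of "a x - a z" "b x - b z" "c x - c z" "d x - d z"]
      by (simp add: plane_linear_diff dist_real_def)
    with \<open>\<delta> > 0\<close> \<delta> show ?thesis
      by (intro exI[of _ \<delta>]) (auto simp: dist_commute intro: le_less_trans)
  qed
  show ?thesis
    by (rule has_derivative_locally_injective[where f' = "\<lambda>x. plane_linear (a x) (b x) (c x) (d x)",
          OF UNIV_I open_UNIV bounded_linear_plane_linear plane_linear_inverse[OF det] deriv onorm_near])
      auto
qed

lemma has_derivative_imp_directional:
  assumes "(g has_derivative D) (at z)"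
  shows "((\<lambda>t. g (z + t *\<^sub>R v)) has_vector_derivative D v) (at 0)"
proof -
  have "((\<lambda>t. z + t *\<^sub>R v) has_derivative (\<lambda>t. t *\<^sub>R v)) (at 0)"
    by (auto intro!: derivative_eq_intros)
  with assms have "((\<lambda>t. g (z + t *\<^sub>R v)) has_derivative (\<lambda>t. D (t *\<^sub>R v))) (at 0)"
    using diff_chain_at[of "\<lambda>t. z + t *\<^sub>R v" "\<lambda>t. t *\<^sub>R v" 0 g D] by (simp add: o_def)
  then show ?thesis
    by (simp add: has_vector_derivative_def linear_scale[OF has_derivative_linear[OF assms]])
qed

lemma has_derivative_partials:
  fixes g :: "complex \<Rightarrow> real"
  assumes "(g has_derivative D) (at z)"
  shows "D = (\<lambda>h. Re h * pdx g z + Im h * pdy g z)"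
proof
  fix h
  have "(\<lambda>t. g (z + of_real t)) = (\<lambda>t. g (z + t *\<^sub>R 1))"
    and "(\<lambda>t. g (z + \<i> * of_real t)) = (\<lambda>t. g (z + t *\<^sub>R \<i>))"
    by (simp_all add: scaleR_conv_of_real mult.commute)
  then have partials: "pdx g z = D 1" "pdy g z = D \<i>"
    unfolding pdx_def pdy_def
    by (metis DERIV_imp_deriv has_real_derivative_iff_has_vector_derivative
        has_derivative_imp_directional[OF assms])+
  have lin: "linear D"
    using has_derivative_linear[OF assms] .
  have "D h = D (Re h *\<^sub>R 1 + Im h *\<^sub>R \<i>)"
    by (rule arg_cong[where f = D]) (simp add: complex_eq_iff)
  also have "\<dots> = Re h * pdx g z + Im h * pdy g z"
    using linear_add[OF lin] linear_scale[OF lin] partials by simp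
  finally show "D h = Re h * pdx g z + Im h * pdy g z" .
qed

lemma harmonic_real_has_derivative:
  assumes "harmonic_real g"
  shows "(g has_derivative (\<lambda>h. Re h * pdx g z + Im h * pdy g z)) (at z)"
proof -
  obtain D where "(g has_derivative D) (at z)"
    using assms unfolding harmonic_real_def differentiable_def by blast
  with has_derivative_partials show ?thesis by metis
qed

lemma harmonic_real_isCont_partials:
  assumes "harmonic_real g"
  shows "isCont (pdx g) z" "isCont (pdy g) z"
  using assms unfolding harmonic_real_def by (auto intro: differentiable_imp_continuous_within)

lemma harmonic_cplx_has_derivative:
  assumes "harmonic_cplx f"
  defines "u \<equiv> \<lambda>z. Re (f z)" and "v \<equiv> \<lambda>z. Im (f z)"
  shows "(f has_derivative plane_linear (pdx u z) (pdy u z) (pdx v z) (pdy v z)) (at z)"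
proof -
  have "harmonic_real u" "harmonic_real v"
    using assms unfolding harmonic_cplx_def by auto
  then have "((\<lambda>z. of_real (u z) + \<i> * of_real (v z)) has_derivative
      (\<lambda>h. of_real (Re h * pdx u z + Im h * pdy u z) + \<i> * of_real (Re h * pdx v z + Im h * pdy v z))) (at z)"
    by (auto intro!: derivative_eq_intros harmonic_real_has_derivative)
  moreover have "(\<lambda>z. of_real (u z) + \<i> * of_real (v z)) = f"
    by (simp add: u_def v_def complex_eq[symmetric])
  moreover have "plane_linear (pdx u z) (pdy u z) (pdx v z) (pdy v z) =
      (\<lambda>h. of_real (Re h * pdx u z + Im h * pdy u z) + \<i> * of_real (Re h * pdx v z + Im h * pdy v z))"
    by (simp add: fun_eq_iff plane_linear_def Complex_eq algebra_simps)
  ultimately show ?thesis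
    by (simp only:)
qed

lemma harmonic_cplx_continuous_on:
  assumes "harmonic_cplx f"
  shows "continuous_on S f"
  using harmonic_cplx_has_derivative[OF assms] has_derivative_continuous
  by (blast intro: continuous_at_imp_continuous_on)

lemma harmonic_cplx_locally_injective:
  assumes "harmonic_cplx f" and "z \<notin> crit_set f"
  shows "\<exists>r>0. inj_on f (ball z r)"
proof (rule locally_injective_plane_map[OF harmonic_cplx_has_derivative[OF assms(1)]])
  show "pdx (\<lambda>z. Re (f z)) z * pdy (\<lambda>z. Im (f z)) z - pdy (\<lambda>z. Re (f z)) z * pdx (\<lambda>z. Im (f z)) z \<noteq> 0"
    using assms(2) by (simp add: crit_set_def jac_def)
qed (use assms(1) harmonic_real_isCont_partials in \<open>auto simp: harmonic_cplx_def\<close>)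

lemma closed_crit_set:
  assumes "harmonic_cplx f"
  shows "closed (crit_set f)"
proof -
  have "continuous_on UNIV (jac f)"
    using assms harmonic_real_isCont_partials unfolding harmonic_cplx_def jac_def
    by (intro continuous_at_imp_continuous_on ballI continuous_intros) auto
  then show ?thesis
    unfolding crit_set_def using continuous_closed_preimage_constant[of UNIV "jac f" 0] by simp
qed

lemma not_in_cluster_inf_imp_far:
  assumes "w \<notin> cluster_inf f"
  obtains r M where "r > 0" "\<And>z. M \<le> norm z \<Longrightarrow> r \<le> dist (f z) w"
proof (rule ccontr)
  assume "\<not> thesis"
  have "\<exists>z. real n \<le> norm z \<and> dist (f z) w < inverse (real (Suc n))" for n
  proof (rule ccontr)
    assume "\<nexists>z. real n \<le> norm z \<and> dist (f z) w < inverse (real (Suc n))"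
    then have "\<And>z. real n \<le> norm z \<Longrightarrow> inverse (real (Suc n)) \<le> dist (f z) w"
      by (simp add: not_less)
    then have thesis
      by (intro that[of "inverse (real (Suc n))" "real n"]) auto
    with \<open>\<not> thesis\<close> show False ..
  qed
  then have "\<forall>n. \<exists>z. real n \<le> norm z \<and> dist (f z) w < inverse (real (Suc n))"
    by blast
  from choice[OF this] obtain zs
    where zs: "\<And>n. real n \<le> norm (zs n)" "\<And>n. dist (f (zs n)) w < inverse (real (Suc n))"
    by blast
  have "eventually (\<lambda>n. real n \<le> norm (zs n)) sequentially"
    by (simp add: zs(1))
  then have "filterlim (\<lambda>n. norm (zs n)) at_top sequentially"
    by (rule filterlim_at_top_mono[OF filterlim_real_sequentially])
  moreover have "(\<lambda>n. f (zs n)) \<longlonglongrightarrow> w"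
  proof (rule tendsto_dist_iff[THEN iffD2], rule Lim_null_comparison[OF _ LIMSEQ_inverse_real_of_nat])
    show "eventually (\<lambda>n. norm (dist (f (zs n)) w) \<le> inverse (real (Suc n))) sequentially"
      using less_imp_le[OF zs(2)] by simp
  qed
  ultimately have "w \<in> cluster_inf f"
    unfolding cluster_inf_def mem_Collect_eq by (intro exI[of _ zs] conjI)
  with assms show False ..
qed

lemma cluster_inf_far:
  assumes "\<zeta> \<in> cluster_inf f" and far: "\<And>z. M \<le> norm z \<Longrightarrow> r \<le> dist (f z) w"
  shows "r \<le> dist \<zeta> w"
proof -
  obtain zs where zs: "filterlim (\<lambda>n. norm (zs n)) at_top sequentially" "(\<lambda>n. f (zs n)) \<longlonglongrightarrow> \<zeta>"
    using assms(1) by (auto simp: cluster_inf_def)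
  have "eventually (\<lambda>n. M \<le> norm (zs n)) sequentially"
    using zs(1) by (simp add: filterlim_at_top)
  then have "eventually (\<lambda>n. r \<le> dist (f (zs n)) w) sequentially"
    by eventually_elim (rule far)
  with tendsto_dist[OF zs(2) tendsto_const] show ?thesis
    by (rule tendsto_lowerbound) simp
qed

lemma closed_image_Un_cluster_inf:
  assumes contf: "continuous_on UNIV f" and "closed S"
  shows "closed (f ` S \<union> cluster_inf f)"
  unfolding closed_def open_subopen[of "- (f ` S \<union> cluster_inf f)"]
proof
  fix w assume w: "w \<in> - (f ` S \<union> cluster_inf f)"
  then obtain r M where "r > 0" and far: "\<And>z. M \<le> norm z \<Longrightarrow> r \<le> dist (f z) w"
    using not_in_cluster_inf_imp_far by blast
  have "compact (f ` (S \<inter> cball 0 M))"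
    using \<open>closed S\<close> by (intro compact_continuous_image continuous_on_subset[OF contf]) auto
  then have "open (ball w r - f ` (S \<inter> cball 0 M))"
    by (intro open_Diff compact_imp_closed) auto
  moreover have "w \<in> ball w r - f ` (S \<inter> cball 0 M)"
    using w \<open>r > 0\<close> by auto
  moreover have "ball w r - f ` (S \<inter> cball 0 M) \<subseteq> - (f ` S \<union> cluster_inf f)"
  proof
    fix y assume y: "y \<in> ball w r - f ` (S \<inter> cball 0 M)"
    have "y \<notin> cluster_inf f"
    proof
      assume "y \<in> cluster_inf f"
      then have "r \<le> dist y w"
        using far by (rule cluster_inf_far)
      with y show False
        by (simp add: dist_commute)
    qed
    moreover have "y \<notin> f ` S"
    proof
      assume "y \<in> f ` S"
      then obtain z where z: "z \<in> S" "y = f z" by blast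
      have "z \<notin> cball 0 M"
        using y z by (auto simp del: mem_cball)
      with y z far[of z] show False
        by (auto simp: dist_commute)
    qed
    ultimately show "y \<in> - (f ` S \<union> cluster_inf f)"
      by blast
  qed
  ultimately show "\<exists>T. open T \<and> w \<in> T \<and> T \<subseteq> - (f ` S \<union> cluster_inf f)"
    by blast
qed

lemma totally_disconnected_subset:
  "totally_disconnected B \<Longrightarrow> A \<subseteq> B \<Longrightarrow> totally_disconnected A"
  unfolding totally_disconnected_def by blast

lemma connected_subset_totally_disconnected_eq_sing:
  assumes "totally_disconnected B" "A \<subseteq> B" "connected A" "a \<in> A"
  shows "A = {a}"
  using assms unfolding totally_disconnected_def by blast

lemma boundary_bumping_cball:
  fixes C :: "'a::euclidean_space set"
  assumes "closed C" "connected C" "c \<in> C" "0 \<le> r" "\<not> C \<subseteq> cball c r"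
  obtains D where "connected D" "c \<in> D" "D \<subseteq> C \<inter> cball c r" "D \<inter> sphere c r \<noteq> {}"
proof -
  define X where "X = top_of_set C"
  define S where "S = C \<inter> cball c r"
  define D where "D = connected_component_of_set (subtopology X S) c"
  have "c \<in> S"
    using assms by (simp add: S_def)
  have "connectedin (subtopology X S) D"
    unfolding D_def by (rule connectedin_connected_component_of)
  moreover have "D \<subseteq> S"
    using connected_component_of_subset_topspace[of "subtopology X S" c]
    by (simp add: D_def X_def S_def)
  ultimately have "connected D"
    by (simp add: connectedin_subtopology X_def)
  moreover have "c \<in> D"
    using \<open>c \<in> S\<close> by (simp add: D_def X_def S_def connected_component_of_refl)
  moreover have "closedin X S"
    by (simp add: X_def S_def closedin_closed_Int)
  moreover have "D \<inter> X frontier_of S \<noteq> {}"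
  proof (rule boundary_bumping_theorem_closed_gen)
    show "connected_space X"
      using \<open>connected C\<close> by (simp add: X_def connected_space_subtopology)
    show "locally_compact_space X"
      unfolding X_def
      by (rule locally_compact_space_closed_subset[OF locally_compact_space_euclidean])
        (simp add: \<open>closed C\<close>)
    show "Hausdorff_space X"
      by (simp add: X_def Hausdorff_space_subtopology)
    show "S \<noteq> topspace X"
      using assms(5) by (auto simp: X_def S_def)
    have "compactin X S"
      using \<open>closed C\<close> by (simp add: X_def S_def compactin_subtopology compact_Int_closed closed_Int_compact)
    moreover have "closedin X D"
      using closedin_connected_component_of[of "subtopology X S" c] \<open>closedin X S\<close>
      by (auto simp: D_def closedin_trans_full)
    ultimately show "compactin X D"
      using \<open>D \<subseteq> S\<close> closed_compactin by blast
    show "D \<in> connected_components_of (subtopology X S)"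
      using \<open>c \<in> S\<close> unfolding D_def X_def
      by (simp add: connected_component_in_connected_components_of S_def)
  qed fact
  moreover have "X frontier_of S \<subseteq> sphere c r"
  proof -
    have "C \<inter> ball c r \<subseteq> X interior_of S"
      by (rule interior_of_maximal) (auto simp: X_def S_def openin_open_Int)
    then show ?thesis
      using closure_of_eq[of X S] \<open>closedin X S\<close>
      by (auto simp: frontier_of_def S_def X_def)
  qed
  ultimately show ?thesis
    using that \<open>D \<subseteq> S\<close> by (auto simp: S_def)
qed

lemma closed_connected_totally_disconnected_near_eq_sing:
  fixes C :: "'a::euclidean_space set"
  assumes "closed C" "connected C" "c \<in> C" "r > 0"
    and td: "totally_disconnected (C \<inter> cball c r)"
  shows "C = {c}"
proof -
  have "C \<subseteq> cball c r"
  proof (rule ccontr)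
    assume "\<not> C \<subseteq> cball c r"
    then obtain D where "connected D" "c \<in> D" "D \<subseteq> C \<inter> cball c r" "D \<inter> sphere c r \<noteq> {}"
      using boundary_bumping_cball assms(1-4) by (metis less_imp_le)
    moreover from this have "D = {c}"
      using td connected_subset_totally_disconnected_eq_sing by blast
    ultimately show False
      using \<open>r > 0\<close> by simp
  qed
  then show ?thesis
    using td assms connected_subset_totally_disconnected_eq_sing by blast
qed

lemma frontier_component_separating:
  fixes R :: "'a::euclidean_space set"
  assumes "open R" "a \<in> R" "b \<notin> closure R"
  obtains C c where "C \<in> components (frontier R)" "\<not> connected_component (- C) a b"
    and "c \<in> C" "c \<in> closed_segment a b"
proof -
  have "\<not> connected_component (- frontier R) a b"
  proof
    assume "connected_component (- frontier R) a b"
    then obtain T where "connected T" "T \<subseteq> - frontier R" "a \<in> T" "b \<in> T"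
      unfolding connected_component_def by blast
    with assms(2,3) closure_subset connected_Int_frontier[of T R] show False
      by blast
  qed
  then obtain C where C: "C \<in> components (frontier R)" "\<not> connected_component (- C) a b"
    using separation_by_component_closed_pointwise[OF frontier_closed] by blast
  moreover have "\<not> closed_segment a b \<subseteq> - C"
    using C(2) connected_componentI[OF connected_segment, of a b "- C" a b] by auto
  ultimately show ?thesis
    using that by blast
qed

lemma frontier_not_totally_disconnected_near:
  fixes R :: "'a::euclidean_space set"
  assumes "2 \<le> DIM('a)" "open R" "z \<in> closure R" "z \<notin> interior (closure R)" "r > 0"
  shows "\<not> totally_disconnected (frontier R \<inter> ball z r)"
proof
  assume td: "totally_disconnected (frontier R \<inter> ball z r)"
  define \<delta> where "\<delta> = r / 4"
  have "\<delta> > 0"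
    using \<open>r > 0\<close> by (simp add: \<delta>_def)
  obtain a where a: "a \<in> R" "dist a z < \<delta>"
    using \<open>z \<in> closure R\<close> \<open>\<delta> > 0\<close> closure_approachable by blast
  obtain b where b: "b \<notin> closure R" "dist b z < \<delta>"
    using \<open>z \<notin> interior (closure R)\<close> \<open>\<delta> > 0\<close> unfolding mem_interior
    by (auto simp: subset_eq dist_commute)
  obtain C c where C: "C \<in> components (frontier R)" "\<not> connected_component (- C) a b"
    and c: "c \<in> C" "c \<in> closed_segment a b"
    using frontier_component_separating[OF \<open>open R\<close> a(1) b(1)] .
  have "closed_segment a b \<subseteq> ball z \<delta>"
    using a(2) b(2) by (intro closed_segment_subset convex_ball) (auto simp: dist_commute)
  with c have "dist z c < \<delta>"
    by auto
  then have "cball c (r / 2) \<subseteq> ball z r"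
    using \<open>r > 0\<close> by (simp add: cball_subset_ball_iff \<delta>_def dist_commute)
  then have "C \<inter> cball c (r / 2) \<subseteq> frontier R \<inter> ball z r"
    using in_components_subset[OF C(1)] by blast
  then have "C = {c}"
    using closed_connected_totally_disconnected_near_eq_sing[of C c "r / 2"]
      closed_components[OF frontier_closed C(1)] in_components_connected[OF C(1)] c(1) \<open>r > 0\<close>
      totally_disconnected_subset[OF td] by auto
  moreover have "a \<notin> frontier R" "b \<notin> frontier R"
    using a(1) b(1) \<open>open R\<close> by (auto simp: frontier_def interior_open)
  ultimately have "connected_component (- C) a b"
    using c(1) in_components_subset[OF C(1)]
    by (intro connected_componentI[OF connected_punctured_universe[OF assms(1)]]) auto
  with C(2) show False ..
qed

lemma ecard_bij_betw: "bij_betw h A B \<Longrightarrow> ecard A = ecard B"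
  unfolding ecard_def using bij_betw_finite bij_betw_same_card by metis

lemma evenly_covered_fibre_bij_betw:
  assumes "\<Union>v = C \<inter> p -` T" "pairwise disjnt v" "\<And>u. u \<in> v \<Longrightarrow> homeomorphism u T p (Q u)"
    and "y \<in> T"
  shows "bij_betw (\<lambda>u. Q u y) v {x\<in>C. p x = y}"
proof (rule bij_betw_imageI)
  have Quy: "Q u y \<in> u" "p (Q u y) = y" if "u \<in> v" for u
  proof -
    have "Q u y \<in> Q u ` T"
      using \<open>y \<in> T\<close> by (rule imageI)
    then show "Q u y \<in> u"
      using homeomorphism_image2[OF assms(3)[OF that]] by simp
    show "p (Q u y) = y"
      using homeomorphism_apply2[OF assms(3)[OF that] \<open>y \<in> T\<close>] .
  qed
  show "inj_on (\<lambda>u. Q u y) v"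
    using assms(2) Quy(1) by (intro inj_onI) (metis disjnt_iff pairwiseD)
  show "(\<lambda>u. Q u y) ` v = {x\<in>C. p x = y}"
  proof
    show "(\<lambda>u. Q u y) ` v \<subseteq> {x\<in>C. p x = y}"
      using Quy assms(1) by blast
    show "{x\<in>C. p x = y} \<subseteq> (\<lambda>u. Q u y) ` v"
    proof
      fix x assume "x \<in> {x\<in>C. p x = y}"
      then obtain u where "u \<in> v" "x \<in> u" "p x = y"
        using assms(1) \<open>y \<in> T\<close> by blast
      then have "Q u y = x"
        using homeomorphism_apply1[OF assms(3)[OF \<open>u \<in> v\<close>] \<open>x \<in> u\<close>] by simp
      with \<open>u \<in> v\<close> show "x \<in> (\<lambda>u. Q u y) ` v"
        by blast
    qed
  qed
qed

lemma covering_space_ecard_fibre_eq: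
  assumes cov: "covering_space C p S" and "connected S" "y \<in> S" "y' \<in> S"
  shows "ecard {x\<in>C. p x = y} = ecard {x\<in>C. p x = y'}"
proof -
  have "(\<lambda>y. ecard {x\<in>C. p x = y}) constant_on S"
  proof (rule locally_constant_imp_constant[OF \<open>connected S\<close>])
    fix a assume "a \<in> S"
    with cov have "\<exists>T. a \<in> T \<and> openin (top_of_set S) T \<and> (\<exists>v. \<Union>v = C \<inter> p -` T \<and>
        (\<forall>u\<in>v. openin (top_of_set C) u) \<and> pairwise disjnt v \<and> (\<forall>u\<in>v. \<exists>q. homeomorphism u T p q))"
      by (simp add: covering_space_def)
    then obtain T v where T: "a \<in> T" "openin (top_of_set S) T" "\<Union>v = C \<inter> p -` T"
      and disj: "pairwise disjnt v" and homeo: "\<forall>u\<in>v. \<exists>q. homeomorphism u T p q"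
      by (elim exE conjE) blast
    from bchoice[OF homeo] obtain Q where Q: "\<And>u. u \<in> v \<Longrightarrow> homeomorphism u T p (Q u)"
      by blast
    have "ecard {x\<in>C. p x = y} = ecard v" if "y \<in> T" for y
      using ecard_bij_betw[OF evenly_covered_fibre_bij_betw[OF T(3) disj Q that]] by simp
    with T(1,2) show "\<exists>T. openin (top_of_set S) T \<and> a \<in> T \<and>
                 (\<forall>y\<in>T. ecard {x\<in>C. p x = y} = ecard {x\<in>C. p x = a})"
      by auto
  qed
  with assms show ?thesis
    unfolding constant_on_def by auto
qed

lemma covering_space_inj_on_simply_connected:
  fixes p :: "'a::real_normed_vector \<Rightarrow> 'b::real_normed_vector"
  assumes cov: "covering_space C p S" and "connected C"
    and "simply_connected S" and "locally path_connected S"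
  shows "inj_on p C"
proof (cases "C = {}")
  case False
  have contp: "continuous_on C p" and pC: "p ` C = S"
    using cov by (simp_all add: covering_space_imp_continuous covering_space_imp_surjective)
  obtain g where contg: "continuous_on S g" and gS: "g \<in> S \<rightarrow> C" and pg: "\<And>y. y \<in> S \<Longrightarrow> p (g y) = y"
    using covering_space_lift[OF cov assms(3,4) continuous_on_id] by auto
  from False obtain x0 where "x0 \<in> C"
    by blast
  define a where "a = g (p x0)"
  have "a \<in> C" "g (p a) = a"
    using \<open>x0 \<in> C\<close> gS pg pC by (auto simp: a_def)
  have "g (p x) = x" if "x \<in> C" for x
  proof (rule covering_space_lift_unique[of C p S "\<lambda>x. g (p x)" a "\<lambda>x. x" C p x,
        OF cov \<open>g (p a) = a\<close> contp])
    show "continuous_on C (\<lambda>x. g (p x))"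
      using continuous_on_compose2[OF contg contp] pC by blast
  qed (use contp pC gS pg \<open>connected C\<close> \<open>a \<in> C\<close> that in \<open>auto intro: continuous_on_id\<close>)
  then show ?thesis
    by (metis inj_onI)
qed simp

lemma finite_disjoint_balls:
  fixes P :: "'a::metric_space set"
  assumes "finite P"
  shows "\<exists>e>0. \<forall>p\<in>P. \<forall>q\<in>P. p \<noteq> q \<longrightarrow> ball p e \<inter> ball q e = {}"
  using assms
proof (induction P rule: finite_induct)
  case (insert x P)
  obtain e where "e > 0" and e: "\<forall>p\<in>P. \<forall>q\<in>P. p \<noteq> q \<longrightarrow> ball p e \<inter> ball q e = {}"
    using insert.IH by blast
  obtain d where "d > 0" and d: "\<forall>q\<in>P. q \<noteq> x \<longrightarrow> d \<le> dist x q"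
    using finite_set_avoid[OF insert.hyps(1)] by blast
  have "ball x (min e (d / 2)) \<inter> ball q (min e (d / 2)) = {}" if "q \<in> P" "q \<noteq> x" for q
    using d that by (intro disjoint_ballI) auto
  with e \<open>e > 0\<close> \<open>d > 0\<close> show ?case
    by (intro exI[of _ "min e (d / 2)"]) (fastforce simp: Int_commute)
qed (auto intro: exI[of _ 1])

text \<open>Boundedness of \<open>K\<close> together with \<open>frontier_avoids\<close> makes \<open>f : K \<rightarrow> B\<close> a proper map.\<close>

locale proper_local_homeomorphism =
  fixes f :: "'a::euclidean_space \<Rightarrow> 'a" and K B :: "'a set"
  assumes continuous: "continuous_on (closure K) f"
    and open_domain: "open K" and bounded_domain: "bounded K" and open_target: "open B"
    and image_subset: "f ` K \<subseteq> B"
    and frontier_avoids: "\<And>z. z \<in> frontier K \<Longrightarrow> f z \<notin> B"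
    and locally_injective: "\<And>z. z \<in> K \<Longrightarrow> \<exists>r>0. inj_on f (ball z r)"
begin

lemma fibre_eq_closure: "w \<in> B \<Longrightarrow> {z\<in>K. f z = w} = {z\<in>closure K. f z = w}"
  using frontier_avoids closure_subset open_domain by (auto simp: frontier_def interior_open)

lemma compact_fibre: "w \<in> B \<Longrightarrow> compact {z\<in>K. f z = w}"
  using fibre_eq_closure continuous_closed_preimage_constant[OF continuous closed_closure]
    bounded_subset[OF bounded_closure[OF bounded_domain], of "{z\<in>closure K. f z = w}"]
  by (simp add: compact_eq_bounded_closed)

lemma finite_fibre:
  assumes "w \<in> B"
  shows "finite {z\<in>K. f z = w}"
proof (rule ccontr)
  assume "infinite {z\<in>K. f z = w}"
  then obtain p where p: "p \<in> {z\<in>K. f z = w}" "p islimpt {z\<in>K. f z = w}"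
    using compact_fibre[OF assms] unfolding compact_eq_Bolzano_Weierstrass by blast
  then obtain r where "r > 0" "inj_on f (ball p r)"
    using locally_injective by blast
  moreover obtain q where "q \<in> {z\<in>K. f z = w}" "q \<noteq> p" "dist q p < r"
    using p(2) \<open>r > 0\<close> islimpt_approachable by blast
  ultimately show False
    using p(1) \<open>r > 0\<close> by (auto simp: inj_on_def dist_commute)
qed

lemma open_image:
  assumes "open U" "U \<subseteq> K"
  shows "open (f ` U)"
  unfolding open_subopen[of "f ` U"]
proof
  fix w assume "w \<in> f ` U"
  then obtain z where "z \<in> U" "w = f z"
    by blast
  then obtain r where "r > 0" "inj_on f (ball z r)"
    using locally_injective assms(2) by blast
  have "open (f ` (U \<inter> ball z r))"
  proof (rule invariance_of_domain)
    show "continuous_on (U \<inter> ball z r) f"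
      using continuous assms(2) closure_subset by (blast intro: continuous_on_subset)
    show "inj_on f (U \<inter> ball z r)"
      using \<open>inj_on f (ball z r)\<close> by (rule inj_on_subset) blast
  qed (use assms(1) in auto)
  with \<open>z \<in> U\<close> \<open>w = f z\<close> \<open>r > 0\<close> show "\<exists>T. open T \<and> w \<in> T \<and> T \<subseteq> f ` U"
    by (intro exI[of _ "f ` (U \<inter> ball z r)"]) auto
qed

lemma image_eq:
  assumes "connected B" "K \<noteq> {}"
  shows "f ` K = B"
proof -
  have "compact (f ` closure K)"
    using continuous bounded_domain by (intro compact_continuous_image) (auto simp: compact_closure)
  moreover have "f ` K = B \<inter> f ` closure K"
    using image_subset fibre_eq_closure closure_subset by blast
  ultimately have "closedin (top_of_set B) (f ` K)"
    by (simp add: closedin_closed_Int compact_imp_closed)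
  moreover have "openin (top_of_set B) (f ` K)"
    using open_image[OF open_domain order_refl] image_subset by (simp add: open_subset)
  ultimately show ?thesis
    using assms connected_clopen by blast
qed

lemma fibre_neighbourhoods:
  assumes "w \<in> B"
  obtains V where "\<And>p. p \<in> {z\<in>K. f z = w} \<Longrightarrow> open (V p) \<and> p \<in> V p \<and> V p \<subseteq> K \<and> inj_on f (V p)"
    and "\<And>p q. p \<in> {z\<in>K. f z = w} \<Longrightarrow> q \<in> {z\<in>K. f z = w} \<Longrightarrow> p \<noteq> q \<Longrightarrow> V p \<inter> V q = {}"
proof -
  let ?P = "{z\<in>K. f z = w}"
  obtain e where "e > 0" and e: "\<forall>p\<in>?P. \<forall>q\<in>?P. p \<noteq> q \<longrightarrow> ball p e \<inter> ball q e = {}"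
    using finite_disjoint_balls[OF finite_fibre[OF assms]] by blast
  have "\<forall>p\<in>?P. \<exists>r>0. inj_on f (ball p r)"
    using locally_injective by blast
  from bchoice[OF this] obtain r where r: "\<And>p. p \<in> ?P \<Longrightarrow> r p > 0 \<and> inj_on f (ball p (r p))"
    by blast
  show ?thesis
  proof (rule that[of "\<lambda>p. K \<inter> ball p (min e (r p))"])
    show "open (K \<inter> ball p (min e (r p))) \<and> p \<in> K \<inter> ball p (min e (r p)) \<and>
        K \<inter> ball p (min e (r p)) \<subseteq> K \<and> inj_on f (K \<inter> ball p (min e (r p)))" if "p \<in> ?P" for p
      using r[OF that] that \<open>e > 0\<close> open_domain by (auto intro: inj_on_subset)
    show "K \<inter> ball p (min e (r p)) \<inter> (K \<inter> ball q (min e (r q))) = {}"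
      if "p \<in> ?P" "q \<in> ?P" "p \<noteq> q" for p q
    proof -
      have "ball p e \<inter> ball q e = {}"
        using e that by blast
      then show ?thesis
        by auto
    qed
  qed
qed

lemma fibre_isolating_neighbourhood:
  assumes "w \<in> B" and V: "\<And>p. p \<in> {z\<in>K. f z = w} \<Longrightarrow> open (V p) \<and> p \<in> V p \<and> V p \<subseteq> K"
  obtains W where "open W" "w \<in> W" "W \<subseteq> B" "\<And>p. p \<in> {z\<in>K. f z = w} \<Longrightarrow> W \<subseteq> f ` V p"
    and "K \<inter> f -` W \<subseteq> (\<Union>p\<in>{z\<in>K. f z = w}. V p)"
proof -
  let ?P = "{z\<in>K. f z = w}"
  define L where "L = closure K - (\<Union>p\<in>?P. V p)"
  have "closed L"
    unfolding L_def using V by (intro closed_Diff open_UN) auto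
  moreover have "bounded L"
    using bounded_subset[OF bounded_closure[OF bounded_domain], of L] by (auto simp: L_def)
  ultimately have "compact L"
    by (simp add: compact_eq_bounded_closed)
  then have "closed (f ` L)"
    by (intro compact_imp_closed compact_continuous_image continuous_on_subset[OF continuous])
      (auto simp: L_def)
  moreover have "w \<notin> f ` L"
  proof
    assume "w \<in> f ` L"
    then obtain z where "z \<in> L" "f z = w"
      by blast
    then have "z \<in> ?P"
      using fibre_eq_closure[OF assms(1)] by (auto simp: L_def)
    with V have "z \<in> V z"
      by blast
    with \<open>z \<in> ?P\<close> \<open>z \<in> L\<close> show False
      by (auto simp: L_def)
  qed
  ultimately obtain \<epsilon> where "\<epsilon> > 0" "ball w \<epsilon> \<subseteq> - f ` L"
    using open_contains_ball[of "- f ` L"] by (simp add: open_Compl) (meson ComplI)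
  define W where "W = ball w \<epsilon> \<inter> B \<inter> (\<Inter>p\<in>?P. f ` V p)"
  show ?thesis
  proof (rule that[of W])
    have "open (f ` V p)" if "p \<in> ?P" for p
      using V[OF that] by (intro open_image) auto
    then show "open W"
      unfolding W_def using finite_fibre[OF assms(1)] open_target by (intro open_Int open_INT) auto
    have "w \<in> f ` V p" if "p \<in> ?P" for p
      using V[OF that] that by (auto intro: rev_image_eqI)
    then show "w \<in> W"
      using assms \<open>\<epsilon> > 0\<close> by (simp add: W_def)
    show "K \<inter> f -` W \<subseteq> (\<Union>p\<in>?P. V p)"
    proof
      fix x assume "x \<in> K \<inter> f -` W"
      then have "x \<in> closure K" "f x \<notin> f ` L"
        using \<open>ball w \<epsilon> \<subseteq> - f ` L\<close> closure_subset by (auto simp: W_def)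
      then show "x \<in> (\<Union>p\<in>?P. V p)"
        unfolding L_def by blast
    qed
  qed (auto simp: W_def)
qed

lemma homeomorphism_on_injective_open:
  assumes "open U" "U \<subseteq> K" "inj_on f U"
  obtains q where "homeomorphism U (f ` U) f q"
proof -
  have "continuous_on U f"
    using continuous closure_subset assms(2) by (blast intro: continuous_on_subset)
  with invariance_of_domain_homeomorphism[OF assms(1) _ order_refl assms(3)] that show ?thesis
    by blast
qed

lemma covering:
  assumes "connected B" "K \<noteq> {}"
  shows "covering_space K f B"
proof (rule covering_spaceI)
  show "continuous_on K f"
    using continuous closure_subset by (rule continuous_on_subset)
  show "f ` K = B"
    using image_eq[OF assms] .
  fix w assume "w \<in> B"
  let ?P = "{z\<in>K. f z = w}"
  obtain V where V: "\<And>p. p \<in> ?P \<Longrightarrow> open (V p) \<and> p \<in> V p \<and> V p \<subseteq> K \<and> inj_on f (V p)"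
    and disj: "\<And>p q. p \<in> ?P \<Longrightarrow> q \<in> ?P \<Longrightarrow> p \<noteq> q \<Longrightarrow> V p \<inter> V q = {}"
    using fibre_neighbourhoods[OF \<open>w \<in> B\<close>] by blast
  obtain W where W: "open W" "w \<in> W" "W \<subseteq> B" "\<And>p. p \<in> ?P \<Longrightarrow> W \<subseteq> f ` V p"
    and cover: "K \<inter> f -` W \<subseteq> (\<Union>p\<in>?P. V p)"
    using fibre_isolating_neighbourhood[OF \<open>w \<in> B\<close>] V by blast
  define U where "U p = V p \<inter> f -` W" for p
  have open_U: "open (U p)" if "p \<in> ?P" for p
    unfolding U_def using V[OF that] W(1) continuous closure_subset
    by (intro continuous_open_preimage) (auto intro: continuous_on_subset)
  have "\<exists>q. homeomorphism (U p) W f q" if p: "p \<in> ?P" for p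
  proof -
    obtain q where "homeomorphism (U p) (f ` U p) f q"
      using homeomorphism_on_injective_open[OF open_U[OF p]] V[OF p]
      by (metis Int_lower1 U_def inj_on_subset order_trans)
    moreover have "f ` U p = W"
      using W(4)[OF p] by (auto simp: U_def)
    ultimately show ?thesis
      by auto
  qed
  moreover have "\<Union>(U ` ?P) = K \<inter> f -` W"
    using V cover by (auto simp: U_def)
  moreover have "pairwise disjnt (U ` ?P)"
    using disj by (auto simp: pairwise_def disjnt_def U_def)
  moreover have "openin (top_of_set K) (U p)" if "p \<in> ?P" for p
    using open_U[OF that] V[OF that] by (auto simp: U_def intro: open_subset)
  ultimately show "\<exists>T. w \<in> T \<and> openin (top_of_set B) T \<and>
      (\<exists>v. \<Union>v = K \<inter> f -` T \<and> (\<forall>u\<in>v. openin (top_of_set K) u) \<and>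
           pairwise disjnt v \<and> (\<forall>u\<in>v. \<exists>q. homeomorphism u T f q))"
    using W open_subset by (intro exI[of _ W] conjI exI[of _ "U ` ?P"]) auto
qed

end

lemma open_subset_interior_closure: "open S \<Longrightarrow> S \<subseteq> interior (closure S)"
  by (simp add: interior_maximal closure_subset)

lemma connected_interior_closure: "connected S \<Longrightarrow> open S \<Longrightarrow> connected (interior (closure S))"
  by (meson connected_intermediate_closure interior_subset open_subset_interior_closure)

lemma closure_interior_closure: "open S \<Longrightarrow> closure (interior (closure S)) = closure S"
  by (metis closure_closure closure_mono interior_subset open_subset_interior_closure subset_antisym)

lemma light_frontier_point_image_notin:
  assumes contf: "continuous_on UNIV f" and "light f" and "open R" and frontier: "frontier R \<subseteq> f -` X"
    and "open B" and "finite (X \<inter> B)" and z: "z \<in> closure R" "z \<notin> interior (closure R)"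
  shows "f z \<notin> B"
proof
  assume "f z \<in> B"
  define U where "U = B - (X \<inter> B - {f z})"
  have "open (f -` U)"
    unfolding U_def using assms(5,6) contf
    by (intro open_vimage open_Diff finite_imp_closed) (auto simp: finite_Diff)
  moreover have "z \<in> f -` U"
    using \<open>f z \<in> B\<close> by (simp add: U_def)
  ultimately obtain r where "r > 0" "ball z r \<subseteq> f -` U"
    using open_contains_ball by blast
  then have "frontier R \<inter> ball z r \<subseteq> f -` {f z}"
    using frontier by (auto simp: U_def)
  moreover have "totally_disconnected (f -` {f z})"
    using \<open>light f\<close> unfolding light_def by blast
  ultimately have "totally_disconnected (frontier R \<inter> ball z r)"
    by (rule totally_disconnected_subset[rotated])
  with frontier_not_totally_disconnected_near[OF _ \<open>open R\<close> z \<open>r > 0\<close>] show False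
    by simp
qed

lemma closed_exceptional_values:
  assumes "harmonic_cplx f"
  shows "closed (f ` crit_set f \<union> cluster_inf f)"
    and "closed (f -` (f ` crit_set f \<union> cluster_inf f))"
proof -
  show closed: "closed (f ` crit_set f \<union> cluster_inf f)"
    using assms by (intro closed_image_Un_cluster_inf harmonic_cplx_continuous_on closed_crit_set)
  show "closed (f -` (f ` crit_set f \<union> cluster_inf f))"
    using closed_vimage[OF closed harmonic_cplx_continuous_on[OF assms]] .
qed

lemma open_exceptional_components:
  assumes "harmonic_cplx f"
  shows "\<Omega> \<in> components (- (f ` crit_set f \<union> cluster_inf f)) \<Longrightarrow> open \<Omega>"
    and "R \<in> components (- (f -` (f ` crit_set f \<union> cluster_inf f))) \<Longrightarrow> open R"
  using open_components[OF open_Compl] closed_exceptional_values[OF assms] by blast+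

lemma proper_local_homeomorphism_interior_closure:
  assumes H: "harmonic_cplx f" and "light f"
    and \<Omega>: "\<Omega> \<in> components (- (f ` crit_set f \<union> cluster_inf f))"
    and "finite (interior (closure \<Omega>) - \<Omega>)"
    and R: "R \<in> components (- (f -` (f ` crit_set f \<union> cluster_inf f)))"
    and "bounded R" "f ` R \<subseteq> \<Omega>"
    and fK: "f ` (interior (closure R) - R) \<subseteq> interior (closure \<Omega>) - \<Omega>"
    and crit: "(interior (closure R) - R) \<inter> crit_set f = {}"
  shows "proper_local_homeomorphism f (interior (closure R)) (interior (closure \<Omega>))"
proof
  define X where "X = f ` crit_set f \<union> cluster_inf f"
  note closed = closed_exceptional_values[OF H, folded X_def]
  note R = R[folded X_def] and \<Omega> = \<Omega>[folded X_def]
  have contf: "continuous_on S f" for S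
    using harmonic_cplx_continuous_on[OF H] .
  have "open R" "open \<Omega>"
    using open_exceptional_components[OF H] assms(3,5) by blast+
  have "frontier R \<subseteq> f -` X"
    using frontier_of_components_closed_complement[OF closed(2) R] .
  have "R \<inter> f -` X = {}"
    using in_components_subset[OF R] by blast
  have "\<Omega> \<inter> X = {}"
    using in_components_subset[OF \<Omega>] by blast
  show "continuous_on (closure (interior (closure R))) f"
    by (rule contf)
  show "open (interior (closure R))" "open (interior (closure \<Omega>))"
    by simp_all
  show "bounded (interior (closure R))"
    using \<open>bounded R\<close> bounded_closure bounded_subset interior_subset by blast
  show "f ` interior (closure R) \<subseteq> interior (closure \<Omega>)"
    using fK \<open>f ` R \<subseteq> \<Omega>\<close> open_subset_interior_closure[OF \<open>open \<Omega>\<close>] by blast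
  show "f z \<notin> interior (closure \<Omega>)" if "z \<in> frontier (interior (closure R))" for z
  proof (rule light_frontier_point_image_notin[OF contf \<open>light f\<close> \<open>open R\<close> \<open>frontier R \<subseteq> f -` X\<close>])
    show "finite (X \<inter> interior (closure \<Omega>))"
      using \<open>\<Omega> \<inter> X = {}\<close> by (intro finite_subset[OF _ \<open>finite (interior (closure \<Omega>) - \<Omega>)\<close>]) blast
    show "z \<in> closure R" "z \<notin> interior (closure R)"
      using that closure_interior_closure[OF \<open>open R\<close>] by (auto simp: frontier_def)
  qed simp
  show "\<exists>r>0. inj_on f (ball z r)" if "z \<in> interior (closure R)" for z
  proof (rule harmonic_cplx_locally_injective[OF H])
    show "z \<notin> crit_set f"
      using that crit \<open>R \<inter> f -` X = {}\<close> by (auto simp: X_def)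
  qed
qed

lemma covering_space_interior_closure:
  assumes "harmonic_cplx f" and "light f"
    and \<Omega>: "\<Omega> \<in> components (- (f ` crit_set f \<union> cluster_inf f))"
    and "finite (interior (closure \<Omega>) - \<Omega>)"
    and R: "R \<in> components (- (f -` (f ` crit_set f \<union> cluster_inf f)))"
    and "bounded R" "f ` R \<subseteq> \<Omega>"
    and "f ` (interior (closure R) - R) \<subseteq> interior (closure \<Omega>) - \<Omega>"
    and "(interior (closure R) - R) \<inter> crit_set f = {}"
  shows "covering_space (interior (closure R)) f (interior (closure \<Omega>))"
proof -
  interpret proper_local_homeomorphism f "interior (closure R)" "interior (closure \<Omega>)"
    by (rule proper_local_homeomorphism_interior_closure[OF assms])
  have "open R" "open \<Omega>"
    using open_exceptional_components[OF assms(1)] R \<Omega> by blast+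
  then have "connected (interior (closure \<Omega>))" "interior (closure R) \<noteq> {}"
    using connected_interior_closure in_components_connected[OF \<Omega>]
      open_subset_interior_closure in_components_nonempty[OF R] by blast+
  then show ?thesis
    by (rule covering)
qed

lemma Val_eq_const:
  assumes "\<Omega> \<noteq> {}" and "\<And>w. w \<in> \<Omega> \<Longrightarrow> ecard {z\<in>R. f z = w} = k"
  shows "Val f R \<Omega> = k"
  unfolding Val_def using assms by (simp add: SUP_const)

theorem corollary5p16:
  fixes f :: "complex \<Rightarrow> complex" and \<Omega> R :: "complex set"
  assumes "harmonic_cplx f"
    and "light f"
    and "\<Omega> \<in> components (- (f ` crit_set f \<union> cluster_inf f))"
    and "finite (interior (closure \<Omega>) - \<Omega>)"
    and "R \<in> components (- (f -` (f ` crit_set f \<union> cluster_inf f)))"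
    and "bounded R"
    and "f ` R = \<Omega>"
    and "f ` (interior (closure R) - R) \<subseteq> interior (closure \<Omega>) - \<Omega>"
    and "(interior (closure R) - R) \<inter> crit_set f = {}"
  shows "(\<forall>w\<in>interior (closure \<Omega>).
            ecard {z\<in>interior (closure R). f z = w} = Val f R \<Omega>)
         \<and> (simply_connected (interior (closure \<Omega>)) \<longrightarrow> inj_on f (interior (closure R)))"
proof -
  let ?K = "interior (closure R)" and ?B = "interior (closure \<Omega>)"
  have cov: "covering_space ?K f ?B"
    using covering_space_interior_closure[OF assms(1-6) _ assms(8,9)] assms(7) by blast
  have "open R" "open \<Omega>"
    using open_exceptional_components[OF assms(1)] assms(3,5) by blast+
  then have "connected ?K" "connected ?B" "\<Omega> \<subseteq> ?B" "R \<subseteq> ?K"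
    using connected_interior_closure in_components_connected assms(3,5) open_subset_interior_closure by blast+
  obtain w0 where "w0 \<in> \<Omega>"
    using in_components_nonempty[OF assms(3)] by blast
  have fibre_eq: "ecard {z\<in>?K. f z = w} = ecard {z\<in>?K. f z = w0}" if "w \<in> ?B" for w
    using covering_space_ecard_fibre_eq[OF cov \<open>connected ?B\<close> that] \<open>w0 \<in> \<Omega>\<close> \<open>\<Omega> \<subseteq> ?B\<close> by blast
  have "{z\<in>R. f z = w} = {z\<in>?K. f z = w}" if "w \<in> \<Omega>" for w
    using \<open>R \<subseteq> ?K\<close> assms(8) that by blast
  then have Val: "Val f R \<Omega> = ecard {z\<in>?K. f z = w0}"
    using \<open>w0 \<in> \<Omega>\<close> fibre_eq \<open>\<Omega> \<subseteq> ?B\<close> by (intro Val_eq_const) auto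
  show ?thesis
  proof (intro conjI ballI impI)
    show "ecard {z\<in>?K. f z = w} = Val f R \<Omega>" if "w \<in> ?B" for w
      by (simp only: fibre_eq[OF that] Val)
    show "inj_on f ?K" if "simply_connected ?B"
      by (rule covering_space_inj_on_simply_connected[OF cov \<open>connected ?K\<close> that])
        (simp add: open_imp_locally_path_connected)
  qed
qed

end
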